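(* Assume (A-2). Then the following hold. (a) For every $\gamma>0$ there exists a unique $\xi(\gamma)\in(0,1/b(0))$ satisfying $$\int_0^\gamma\Big(\frac{b(x)\xi(\gamma)}{1-b(x)\xi(\gamma)}\Big)^2dx=1.$$ The map $\gamma\mapsto\xi(\gamma)$ on $(0,\infty)$ is non-increasing and continuous. (b) There exists a unique $\xi(\infty)\in(0,1/b(0))$ satisfying $\int_0^\infty\big(\frac{b(x)\xi(\infty)}{1-b(x)\xi(\infty)}\big)^2dx=1$, and $\lim_{\gamma\to\infty}\xi(\gamma)=\xi(\infty)$. (c) $\lim_{\gamma\to\infty}\psi\big(1/\xi(\gamma)\big)=\psi\big(1/\xi(\infty)\big)$.
   Context: Assumption (A-2): $b:[0,\infty)\to[0,\infty)$ is non-increasing, satisfies $b(0)>0$, is Lipschitz continuous at $0$, and satisfies $\int_0^\infty b(x)\,dx<\infty$. For $y>b(0)$, set $\psi(y)=y\big(1+\int_0^\infty\frac{b(x)}{y-b(x)}\,dx\big)$. *)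

theory Defs
  imports "HOL-Analysis.Analysis"
begin

definition assumption_A2 :: "(real \<Rightarrow> real) \<Rightarrow> bool" where
  "assumption_A2 b \<longleftrightarrow>
     (\<forall>x\<ge>0. b x \<ge> 0) \<and>
     (\<forall>x y. 0 \<le> x \<longrightarrow> x \<le> y \<longrightarrow> b y \<le> b x) \<and>
     b 0 > 0 \<and>
     (\<exists>L \<delta>. \<delta> > 0 \<and> (\<forall>x\<in>{0..\<delta>}. \<bar>b x - b 0\<bar> \<le> L * x)) \<and>
     b integrable_on {0..}"

definition xi_integrand :: "(real \<Rightarrow> real) \<Rightarrow> real \<Rightarrow> real \<Rightarrow> real" where
  "xi_integrand b \<xi> x = (b x * \<xi> / (1 - b x * \<xi>))^2"

definition xi_eq :: "(real \<Rightarrow> real) \<Rightarrow> real set \<Rightarrow> real \<Rightarrow> bool" where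
  "xi_eq b S \<xi> \<longleftrightarrow> \<xi> \<in> {0<..<1 / b 0} \<and> (xi_integrand b \<xi> has_integral 1) S"

definition xi :: "(real \<Rightarrow> real) \<Rightarrow> real \<Rightarrow> real" where
  "xi b \<gamma> = (THE \<xi>. xi_eq b {0..\<gamma>} \<xi>)"

definition xi_inf :: "(real \<Rightarrow> real) \<Rightarrow> real" where
  "xi_inf b = (THE \<xi>. xi_eq b {0..} \<xi>)"

definition psi :: "(real \<Rightarrow> real) \<Rightarrow> real \<Rightarrow> real" where
  "psi b y = y * (1 + integral {0..} (\<lambda>x. b x / (y - b x)))"

end

theory Submission
  imports Defs
begin

(* For S = [0, gamma] or S = [0, inf), F_S(xi) = int_S (b xi / (1 - b xi))^2 is a strictly increasing,
   locally Lipschitz function of xi in [0, 1/b(0)) with F_S(0) = 0. Because b is Lipschitz at 0,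
   for xi = (1 - eps)/b(0) the integrand is of order eps^-2 on an interval of length of order eps,
   so F_S exceeds 1 and the root xi(gamma) exists and is unique. As F_[0,gamma] increases with gamma,
   xi(gamma) decreases. Since F_[0,gamma](xi) is continuous in gamma and tends to F_[0,inf)(xi),
   trapping the root between two fixed values of xi yields continuity of xi(gamma) and its limit
   xi(inf). Finally psi(1/xi) = (1 + int b xi / (1 - b xi)) / xi is continuous in xi by the same
   Lipschitz estimate. *)

lemma tendsto_integral_Icc_at_top:
  fixes f :: "real \<Rightarrow> real"
  assumes f: "f integrable_on {a..}" and nonneg: "\<And>x. a \<le> x \<Longrightarrow> 0 \<le> f x"
  shows "((\<lambda>y. integral {a..y} f) \<longlongrightarrow> integral {a..} f) at_top"
proof -
  have abs: "f absolutely_integrable_on {a..}"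
    using f nonneg by (intro nonnegative_absolutely_integrable_1) auto
  then have abs_Icc: "f absolutely_integrable_on {a..y}" for y
    by (rule set_integrable_subset) auto
  have "((\<lambda>y. LINT x:{a..y}|lebesgue. f x) \<longlongrightarrow> (LINT x:{a..}|lebesgue. f x)) at_top"
    using abs by (intro tendsto_set_lebesgue_integral_at_top) auto
  then show ?thesis
    by (simp add: set_lebesgue_integral_eq_integral(2)[OF abs] set_lebesgue_integral_eq_integral(2)[OF abs_Icc])
qed

lemma continuous_on_Ioo_if_continuous_on_Icc:
  fixes f :: "real \<Rightarrow> 'a::topological_space"
  assumes "\<And>d. d < u \<Longrightarrow> continuous_on {l..d} f"
  shows "continuous_on {l<..<u} f"
proof (intro continuous_at_imp_continuous_on ballI)
  fix x assume x: "x \<in> {l<..<u}"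
  then have "continuous_on {l..(x + u) / 2} f" using assms by simp
  moreover have "x \<in> interior {l..(x + u) / 2}" using x by simp
  ultimately show "isCont f x" by (rule continuous_on_interior)
qed

lemma ex1_root_strict_mono_on:
  fixes G :: "real \<Rightarrow> real"
  assumes mono: "strict_mono_on I G" and cont: "continuous_on {l..r} G" and sub: "{l..r} \<subseteq> I"
    and "l \<le> r" "G l \<le> c" "c \<le> G r"
  shows "\<exists>!\<xi>. \<xi> \<in> I \<and> G \<xi> = c"
proof -
  obtain \<xi> where "\<xi> \<in> {l..r}" "G \<xi> = c"
    using IVT'[of G l c r, OF _ _ _ cont] assms by auto
  then show ?thesis
    using sub strict_mono_on_eq[OF mono] by blast
qed

lemma tendsto_root_of_mono_family:
  fixes F :: "'a \<Rightarrow> real \<Rightarrow> real" and x :: "'a \<Rightarrow> real"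
  assumes I: "open I" "r \<in> I" and G: "strict_mono_on I G" "G r = c"
    and lim: "\<And>\<xi>. \<xi> \<in> I \<Longrightarrow> ((\<lambda>t. F t \<xi>) \<longlongrightarrow> G \<xi>) net"
    and mono: "\<forall>\<^sub>F t in net. mono_on I (F t)"
    and root: "\<forall>\<^sub>F t in net. x t \<in> I \<and> F t (x t) = c"
  shows "(x \<longlongrightarrow> r) net"
proof (rule tendstoI)
  fix e :: real assume "e > 0"
  obtain \<delta> where \<delta>: "\<delta> > 0" "ball r \<delta> \<subseteq> I" using I open_contains_ball by blast
  define \<eta> where "\<eta> = min e \<delta> / 2"
  have \<eta>: "0 < \<eta>" "\<eta> < e" "r - \<eta> \<in> I" "r + \<eta> \<in> I"
    using \<delta> \<open>e > 0\<close> unfolding \<eta>_def by (auto intro!: subsetD[OF \<delta>(2)] simp: dist_real_def)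
  have "G (r - \<eta>) < c" "c < G (r + \<eta>)"
    using G \<eta> I(2) strict_mono_on_less[OF G(1)] by auto
  then have "\<forall>\<^sub>F t in net. F t (r - \<eta>) < c" "\<forall>\<^sub>F t in net. c < F t (r + \<eta>)"
    using lim[OF \<eta>(3)] lim[OF \<eta>(4)] by (auto dest: order_tendstoD)
  with mono root show "\<forall>\<^sub>F t in net. dist (x t) r < e"
  proof eventually_elim
    case (elim t)
    have "r - \<eta> < x t" "x t < r + \<eta>"
      using elim \<eta> mono_onD[OF elim(1)] by (meson not_le)+
    then show ?case using \<eta> by (simp add: dist_real_def)
  qed
qed

definition odds :: "real \<Rightarrow> real" where
  "odds u = u / (1 - u)"

lemma odds_diff: "u < 1 \<Longrightarrow> v < 1 \<Longrightarrow> odds v - odds u = (v - u) / ((1 - u) * (1 - v))"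
  unfolding odds_def by (simp add: field_simps)

lemma odds_mono:
  assumes "u \<le> v" "v < 1"
  shows "odds u \<le> odds v"
proof -
  have "0 \<le> (v - u) / ((1 - u) * (1 - v))"
    using assms by (intro divide_nonneg_pos) auto
  then show ?thesis using odds_diff[of u v] assms by linarith
qed

lemma odds_nonneg: "0 \<le> u \<Longrightarrow> u < 1 \<Longrightarrow> 0 \<le> odds u"
  unfolding odds_def by simp

lemma odds_lipschitz: "m < 1 \<Longrightarrow> (1 / (1 - m)^2)-lipschitz_on {..m} odds"
proof (rule lipschitz_onI)
  fix u v assume m: "m < 1" and uv: "u \<in> {..m}" "v \<in> {..m}"
  have "(1 - m)^2 \<le> (1 - u) * (1 - v)"
    unfolding power2_eq_square using m uv by (intro mult_mono) auto
  then have "\<bar>v - u\<bar> / ((1 - u) * (1 - v)) \<le> \<bar>v - u\<bar> / (1 - m)^2"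
    using m uv by (intro divide_left_mono) auto
  moreover have "dist (odds u) (odds v) = \<bar>v - u\<bar> / ((1 - u) * (1 - v))"
    using m uv odds_diff[of u v]
    by (simp add: dist_real_def abs_minus_commute[of "odds u"] abs_divide abs_mult)
  ultimately show "dist (odds u) (odds v) \<le> 1 / (1 - m)^2 * dist u v"
    by (simp add: dist_real_def abs_minus_commute)
qed simp

lemma odds_sq_lipschitz:
  assumes "0 \<le> m" "m < 1"
  shows "(2 * m / (1 - m)^3)-lipschitz_on {0..m} (\<lambda>u. (odds u)^2)"
proof (rule lipschitz_onI)
  fix u v assume uv: "u \<in> {0..m}" "v \<in> {0..m}"
  have diff: "\<bar>odds u - odds v\<bar> \<le> \<bar>u - v\<bar> / (1 - m)^2"
    using lipschitz_onD[OF odds_lipschitz[OF assms(2)], of u v] uv by (simp add: dist_real_def)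
  have sum: "\<bar>odds u + odds v\<bar> \<le> 2 * m / (1 - m)"
    using uv assms odds_mono[of u m] odds_mono[of v m] odds_nonneg[of u] odds_nonneg[of v]
    by (simp add: odds_def)
  have "dist ((odds u)^2) ((odds v)^2) = \<bar>odds u - odds v\<bar> * \<bar>odds u + odds v\<bar>"
    by (simp add: dist_real_def power2_eq_square algebra_simps flip: abs_mult)
  also have "\<dots> \<le> \<bar>u - v\<bar> / (1 - m)^2 * (2 * m / (1 - m))"
    using diff sum by (intro mult_mono) auto
  also have "\<dots> = 2 * m / (1 - m)^3 * dist u v"
    using assms by (simp add: dist_real_def power2_eq_square power3_eq_cube)
  finally show "dist ((odds u)^2) ((odds v)^2) \<le> 2 * m / (1 - m)^3 * dist u v" .
qed (use assms in simp)

lemma odds_sq_diff_ge: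
  assumes "0 \<le> u" "u \<le> v" "v < 1"
  shows "v^2 - u^2 \<le> (odds v)^2 - (odds u)^2"
proof -
  have "(1 - u) * (1 - v) \<le> 1" using assms by (intro mult_le_one) auto
  then have "v - u \<le> odds v - odds u"
    using assms odds_diff[of u v] by (simp add: le_divide_eq mult_left_le)
  moreover have "u \<le> odds u" "v \<le> odds v"
    using assms by (auto simp: odds_def le_divide_eq algebra_simps)
  ultimately have "(v - u) * (v + u) \<le> (odds v - odds u) * (odds v + odds u)"
    using assms by (intro mult_mono) auto
  then show ?thesis by (simp add: power2_eq_square algebra_simps)
qed

lemma odds_sq_near_1:
  assumes "0 < \<epsilon>" "\<epsilon> \<le> 1/4" "1 - 2 * \<epsilon> \<le> u" "u \<le> 1 - \<epsilon>"
  shows "1 / (16 * \<epsilon>^2) \<le> (odds u)^2"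
proof -
  have "(1/2) / (2 * \<epsilon>) \<le> odds u"
    unfolding odds_def using assms by (intro frac_le) auto
  then have "((1/2) / (2 * \<epsilon>))^2 \<le> (odds u)^2"
    using assms by (intro power_mono) auto
  then show ?thesis by (simp add: power2_eq_square)
qed

definition initial_interval :: "real set \<Rightarrow> bool" where
  "initial_interval S \<longleftrightarrow> S = {0..} \<or> (\<exists>\<gamma>>0. S = {0..\<gamma>})"

lemma initial_interval_subset: "initial_interval S \<Longrightarrow> S \<subseteq> {0..}"
  unfolding initial_interval_def by auto

lemma initial_interval_contains_Icc:
  assumes "initial_interval S"
  obtains \<gamma> where "0 < \<gamma>" "{0..\<gamma>} \<subseteq> S"
  using assms unfolding initial_interval_def by (metis atLeastAtMost_iff atLeast_iff subsetI zero_less_one)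

lemma initial_interval_Icc: "0 < \<gamma> \<Longrightarrow> initial_interval {0..\<gamma>}"
  by (auto simp: initial_interval_def)

lemma initial_interval_Ici: "initial_interval {0..}"
  by (simp add: initial_interval_def)

lemma xi_integrand_eq_odds: "xi_integrand b \<xi> x = (odds (b x * \<xi>))^2"
  by (simp add: xi_integrand_def odds_def)

locale A2 =
  fixes b :: "real \<Rightarrow> real"
  assumes A2: "assumption_A2 b"
begin

lemma b_nonneg: "0 \<le> x \<Longrightarrow> 0 \<le> b x"
  using A2 unfolding assumption_A2_def by blast

lemma b_antimono: "0 \<le> x \<Longrightarrow> x \<le> y \<Longrightarrow> b y \<le> b x"
  using A2 unfolding assumption_A2_def by blast

lemma b_le_b0: "0 \<le> x \<Longrightarrow> b x \<le> b 0"
  using b_antimono[of 0 x] by simp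

lemma b0_pos: "0 < b 0"
  using A2 unfolding assumption_A2_def by blast

lemma b_integrable: "initial_interval S \<Longrightarrow> b integrable_on S"
  using A2 unfolding assumption_A2_def initial_interval_def
  by (auto intro: integrable_on_subinterval)

lemma b_lower_bound_near_0:
  obtains L \<delta> where "0 < L" "0 < \<delta>" "\<And>x. x \<in> {0..\<delta>} \<Longrightarrow> b 0 - L * x \<le> b x"
proof -
  obtain L \<delta> where "0 < \<delta>" and L: "\<forall>x\<in>{0..\<delta>}. \<bar>b x - b 0\<bar> \<le> L * x"
    using A2 unfolding assumption_A2_def by blast
  moreover have "b 0 - max L 1 * x \<le> b x" if "x \<in> {0..\<delta>}" for x
    using L that mult_right_mono[of L "max L 1" x] by force
  ultimately show thesis using that[of "max L 1" \<delta>] by auto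
qed

lemma b_pos_near_0:
  assumes "0 < \<gamma>"
  obtains h where "0 < h" "h \<le> \<gamma>" "0 < b h"
proof -
  obtain L \<delta> where L: "0 < L" "0 < \<delta>" "\<And>x. x \<in> {0..\<delta>} \<Longrightarrow> b 0 - L * x \<le> b x"
    using b_lower_bound_near_0 by blast
  define h where "h = min \<gamma> (min \<delta> (b 0 / (2 * L)))"
  have "h \<le> b 0 / (2 * L)" unfolding h_def by simp
  then have "L * h \<le> b 0 / 2"
    using L by (simp add: field_simps)
  moreover have "h \<in> {0..\<delta>}"
    using L assms b0_pos unfolding h_def by auto
  ultimately have "0 < b h"
    using L(3)[of h] b0_pos by linarith
  then show thesis using that[of h] L assms b0_pos unfolding h_def by auto
qed

lemma integrable_on_Icc_comp_b:
  fixes \<phi> :: "real \<Rightarrow> real"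
  assumes \<phi>: "mono_on {0..b 0 * \<xi>} \<phi>" and "0 \<le> \<xi>" "0 \<le> a"
  shows "(\<lambda>x. \<phi> (b x * \<xi>)) integrable_on {a..c}"
proof -
  have "mono_on {a..c} (\<lambda>x. - \<phi> (b x * \<xi>))"
  proof (rule mono_onI)
    fix r s assume rs: "r \<in> {a..c}" "s \<in> {a..c}" "r \<le> s"
    then have "b s * \<xi> \<le> b r * \<xi>" "b s * \<xi> \<in> {0..b 0 * \<xi>}" "b r * \<xi> \<in> {0..b 0 * \<xi>}"
      using assms b_nonneg b_antimono b_le_b0 by (auto intro: mult_right_mono)
    then show "- \<phi> (b r * \<xi>) \<le> - \<phi> (b s * \<xi>)"
      by (meson mono_onD[OF \<phi>] neg_le_iff_le)
  qed
  from integrable_neg[OF integrable_on_mono_on[OF this]] show ?thesis by simp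
qed

text \<open>On the half-line, \<open>\<phi> (b x * \<xi>)\<close> is dominated by \<open>K * \<xi> * b x\<close> because \<open>\<phi> 0 = 0\<close>.\<close>
lemma integrable_on_comp_b:
  fixes \<phi> :: "real \<Rightarrow> real"
  assumes S: "initial_interval S"
    and \<phi>: "mono_on {0..b 0 * \<xi>} \<phi>" "K-lipschitz_on {0..b 0 * \<xi>} \<phi>" "\<phi> 0 = 0" and "0 \<le> \<xi>"
  shows "(\<lambda>x. \<phi> (b x * \<xi>)) integrable_on S"
proof (cases "S = {0..}")
  case True
  show ?thesis
    unfolding True
  proof (rule integrable_on_all_intervals_integrable_bound
      [where S = "{0..}" and f = "\<lambda>x. \<phi> (b x * \<xi>)" and g = "\<lambda>x. K * \<xi> * b x"])
    fix u v :: real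
    have "(\<lambda>x. \<phi> (b x * \<xi>)) integrable_on {max 0 u..v}"
      using \<phi> \<open>0 \<le> \<xi>\<close> by (intro integrable_on_Icc_comp_b) auto
    moreover have "{0..} \<inter> cbox u v = {max 0 u..v}" by auto
    ultimately show "(\<lambda>x. if x \<in> {0..} then \<phi> (b x * \<xi>) else 0) integrable_on cbox u v"
      using integrable_restrict_Int[of "{0..}" "\<lambda>x. \<phi> (b x * \<xi>)" "cbox u v"] by simp
  next
    fix x :: real assume "x \<in> {0..}"
    then have "b x * \<xi> \<in> {0..b 0 * \<xi>}"
      using \<open>0 \<le> \<xi>\<close> b_nonneg b_le_b0 by (auto intro: mult_right_mono)
    then show "norm (\<phi> (b x * \<xi>)) \<le> K * \<xi> * b x"
      using lipschitz_onD[OF \<phi>(2), of "b x * \<xi>" 0] \<phi>(3) \<open>0 \<le> \<xi>\<close> \<open>x \<in> {0..}\<close> b_nonneg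
      by (simp add: dist_real_def mult_ac)
  next
    show "(\<lambda>x. K * \<xi> * b x) integrable_on {0..}"
      using integrable_on_cmult_left[OF b_integrable[OF S], of "K * \<xi>"] True by simp
  qed
next
  case False
  then show ?thesis
    using S \<phi> \<open>0 \<le> \<xi>\<close> unfolding initial_interval_def by (auto intro: integrable_on_Icc_comp_b)
qed

lemma lipschitz_on_integral_comp_b:
  fixes \<phi> :: "real \<Rightarrow> real"
  assumes S: "initial_interval S"
    and \<phi>: "mono_on {0..b 0 * d} \<phi>" "K-lipschitz_on {0..b 0 * d} \<phi>" "\<phi> 0 = 0"
  shows "(K * integral S b)-lipschitz_on {0..d} (\<lambda>\<xi>. integral S (\<lambda>x. \<phi> (b x * \<xi>)))"
proof (rule lipschitz_onI)
  have int: "(\<lambda>x. \<phi> (b x * \<xi>)) integrable_on S" if "\<xi> \<in> {0..d}" for \<xi>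
  proof -
    have "{0..b 0 * \<xi>} \<subseteq> {0..b 0 * d}"
      using that b0_pos by (auto intro: order_trans mult_left_mono)
    then show ?thesis
      using that by (intro integrable_on_comp_b[OF S mono_on_subset[OF \<phi>(1)]
          lipschitz_on_subset[OF \<phi>(2)] \<phi>(3)]) auto
  qed
  fix \<xi>1 \<xi>2 assume \<xi>: "\<xi>1 \<in> {0..d}" "\<xi>2 \<in> {0..d}"
  have "norm (integral S (\<lambda>x. \<phi> (b x * \<xi>1) - \<phi> (b x * \<xi>2)))
      \<le> integral S (\<lambda>x. K * dist \<xi>1 \<xi>2 * b x)"
  proof (rule integral_norm_bound_integral)
    show "(\<lambda>x. \<phi> (b x * \<xi>1) - \<phi> (b x * \<xi>2)) integrable_on S"
      using int \<xi> by (intro integrable_diff) auto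
    show "(\<lambda>x. K * dist \<xi>1 \<xi>2 * b x) integrable_on S"
      using integrable_on_cmult_left[OF b_integrable[OF S], of "K * dist \<xi>1 \<xi>2"] by simp
  next
    fix x assume "x \<in> S"
    then have x: "0 \<le> b x" "b x \<le> b 0" using initial_interval_subset[OF S] b_nonneg b_le_b0 by auto
    then have "b x * \<xi>1 \<in> {0..b 0 * d}" "b x * \<xi>2 \<in> {0..b 0 * d}"
      using \<xi> by (auto intro: mult_mono)
    from lipschitz_onD[OF \<phi>(2) this]
    have "\<bar>\<phi> (b x * \<xi>1) - \<phi> (b x * \<xi>2)\<bar> \<le> K * \<bar>b x * \<xi>1 - b x * \<xi>2\<bar>"
      by (simp add: dist_real_def)
    also have "\<dots> = K * dist \<xi>1 \<xi>2 * b x"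
      using x by (simp add: dist_real_def abs_mult flip: right_diff_distrib)
    finally show "norm (\<phi> (b x * \<xi>1) - \<phi> (b x * \<xi>2)) \<le> K * dist \<xi>1 \<xi>2 * b x"
      by simp
  qed
  then show "dist (integral S (\<lambda>x. \<phi> (b x * \<xi>1))) (integral S (\<lambda>x. \<phi> (b x * \<xi>2)))
      \<le> K * integral S b * dist \<xi>1 \<xi>2"
    using int \<xi> by (simp add: dist_real_def integral_diff mult_ac)
next
  show "0 \<le> K * integral S b"
    using lipschitz_on_nonneg[OF \<phi>(2)] initial_interval_subset[OF S] b_nonneg
    by (auto intro!: mult_nonneg_nonneg integral_nonneg b_integrable[OF S])
qed

definition xi_integral :: "real set \<Rightarrow> real \<Rightarrow> real" where
  "xi_integral S \<xi> = integral S (xi_integrand b \<xi>)"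

lemma b0_mult_less_1: "\<xi> < 1 / b 0 \<Longrightarrow> b 0 * \<xi> < 1"
  using b0_pos by (simp add: field_simps)

lemma odds_sq_on_range:
  assumes "0 \<le> \<xi>" "\<xi> < 1 / b 0"
  defines "m \<equiv> b 0 * \<xi>"
  shows "mono_on {0..m} (\<lambda>u. (odds u)^2)" "(2 * m / (1 - m)^3)-lipschitz_on {0..m} (\<lambda>u. (odds u)^2)"
proof -
  have m: "0 \<le> m" "m < 1" unfolding m_def using assms b0_pos b0_mult_less_1 by auto
  show "mono_on {0..m} (\<lambda>u. (odds u)^2)"
    using m by (intro mono_onI power_mono odds_mono odds_nonneg) auto
  show "(2 * m / (1 - m)^3)-lipschitz_on {0..m} (\<lambda>u. (odds u)^2)"
    using odds_sq_lipschitz[OF m] .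
qed

lemma xi_integrand_integrable:
  assumes "initial_interval S" "0 \<le> \<xi>" "\<xi> < 1 / b 0"
  shows "xi_integrand b \<xi> integrable_on S"
  unfolding xi_integrand_eq_odds
  using assms odds_sq_on_range[OF assms(2,3)] by (intro integrable_on_comp_b) (auto simp: odds_def)

lemma continuous_on_xi_integral:
  assumes "initial_interval S" "d < 1 / b 0"
  shows "continuous_on {0..d} (xi_integral S)"
proof (cases "0 \<le> d")
  case True
  have "odds 0 ^ 2 = 0" by (simp add: odds_def)
  from lipschitz_on_integral_comp_b[OF assms(1) odds_sq_on_range[OF True assms(2)] this]
  have "continuous_on {0..d} (\<lambda>\<xi>. integral S (\<lambda>x. (odds (b x * \<xi>))^2))"
    by (rule lipschitz_on_continuous_on)
  then show ?thesis unfolding xi_integral_def xi_integrand_eq_odds .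
qed simp

lemma xi_integrand_mono:
  assumes "0 \<le> \<xi>1" "\<xi>1 \<le> \<xi>2" "\<xi>2 < 1 / b 0" "0 \<le> x"
  shows "xi_integrand b \<xi>1 x \<le> xi_integrand b \<xi>2 x"
proof -
  have "b x * \<xi>1 \<le> b x * \<xi>2" "b x * \<xi>2 \<le> b 0 * \<xi>2" "0 \<le> b x * \<xi>1"
    using assms b_nonneg b_le_b0 by (auto intro: mult_left_mono mult_right_mono)
  then show ?thesis
    unfolding xi_integrand_eq_odds using assms b0_mult_less_1[OF assms(3)]
    by (intro power_mono odds_mono odds_nonneg) auto
qed

lemma xi_integral_mono_domain:
  assumes "initial_interval S" "initial_interval T" "S \<subseteq> T" "0 \<le> \<xi>" "\<xi> < 1 / b 0"
  shows "xi_integral S \<xi> \<le> xi_integral T \<xi>"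
  unfolding xi_integral_def using assms
  by (intro integral_subset_le xi_integrand_integrable) (auto simp: xi_integrand_def)

lemma xi_integrand_diff_ge:
  assumes "0 \<le> \<xi>1" "\<xi>1 \<le> \<xi>2" "\<xi>2 < 1 / b 0" "0 \<le> x"
  shows "(b x)^2 * (\<xi>2^2 - \<xi>1^2) \<le> xi_integrand b \<xi>2 x - xi_integrand b \<xi>1 x"
proof -
  have "b x * \<xi>2 \<le> b 0 * \<xi>2"
    by (rule mult_right_mono) (use assms b_le_b0 in auto)
  moreover have "b x * \<xi>1 \<le> b x * \<xi>2"
    by (rule mult_left_mono) (use assms b_nonneg in auto)
  moreover have "0 \<le> b x * \<xi>1"
    using assms b_nonneg by simp
  moreover have "b 0 * \<xi>2 < 1"
    using assms b0_mult_less_1 by simp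
  ultimately have "(b x * \<xi>2)^2 - (b x * \<xi>1)^2 \<le> xi_integrand b \<xi>2 x - xi_integrand b \<xi>1 x"
    unfolding xi_integrand_eq_odds by (intro odds_sq_diff_ge) auto
  then show ?thesis by (simp add: power_mult_distrib algebra_simps)
qed

text \<open>Strictness comes from an initial piece \<open>[0, h]\<close> on which \<open>b\<close> stays positive.\<close>
lemma strict_mono_on_xi_integral:
  assumes S: "initial_interval S"
  shows "strict_mono_on {0..<1 / b 0} (xi_integral S)"
proof (rule strict_mono_onI)
  fix \<xi>1 \<xi>2 assume \<xi>: "\<xi>1 \<in> {0..<1 / b 0}" "\<xi>2 \<in> {0..<1 / b 0}" "\<xi>1 < \<xi>2"
  obtain \<gamma> where "0 < \<gamma>" "{0..\<gamma>} \<subseteq> S" using initial_interval_contains_Icc[OF S] .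
  then obtain h where h: "0 < h" "{0..h} \<subseteq> S" "0 < b h"
    by (metis atLeastatMost_subset_iff b_pos_near_0 order.trans order_refl)
  define d where "d x = xi_integrand b \<xi>2 x - xi_integrand b \<xi>1 x" for x
  define c where "c = (b h)^2 * (\<xi>2^2 - \<xi>1^2)"
  have c: "0 < c"
    unfolding c_def using h \<xi> by (simp add: power_strict_mono)
  have int: "d integrable_on S" "d integrable_on {0..h}"
    unfolding d_def using \<xi> S initial_interval_Icc[OF h(1)]
    by (auto intro!: integrable_diff xi_integrand_integrable)
  have "c \<le> d x" if x: "x \<in> {0..h}" for x
  proof -
    have "(b h)^2 \<le> (b x)^2" using x h b_antimono by (intro power_mono) auto
    moreover have "\<xi>1^2 \<le> \<xi>2^2" using \<xi> by (intro power_mono) auto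
    ultimately have "c \<le> (b x)^2 * (\<xi>2^2 - \<xi>1^2)"
      unfolding c_def by (intro mult_right_mono) auto
    also have "\<dots> \<le> d x"
      unfolding d_def using \<xi> x by (intro xi_integrand_diff_ge) auto
    finally show ?thesis .
  qed
  then have "h * c \<le> integral {0..h} d"
    using integral_le[OF integrable_const_ivl int(2), of c] h by simp
  also have "\<dots> \<le> integral S d"
    using int h initial_interval_subset[OF S] xi_integrand_mono[of \<xi>1 \<xi>2] \<xi>
    by (intro integral_subset_le) (auto simp: d_def)
  also have "\<dots> = xi_integral S \<xi>2 - xi_integral S \<xi>1"
    unfolding d_def xi_integral_def using \<xi> S by (intro integral_diff xi_integrand_integrable) auto
  finally show "xi_integral S \<xi>1 < xi_integral S \<xi>2"
    using mult_pos_pos[OF h(1) c] by linarith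
qed

lemma xi_integrand_near_pole:
  assumes \<epsilon>: "0 < \<epsilon>" "\<epsilon> \<le> 1/4" and x: "0 \<le> x" "b 0 - L * x \<le> b x" "L * x \<le> \<epsilon> * b 0"
  shows "1 / (16 * \<epsilon>^2) \<le> xi_integrand b ((1 - \<epsilon>) / b 0) x"
proof -
  define \<xi> where "\<xi> = (1 - \<epsilon>) / b 0"
  have \<xi>: "0 \<le> \<xi>" "b 0 * \<xi> = 1 - \<epsilon>"
    unfolding \<xi>_def using \<epsilon> b0_pos by auto
  have "b x * \<xi> \<le> b 0 * \<xi>"
    using x \<xi> b_le_b0 by (intro mult_right_mono) auto
  moreover have "(1 - \<epsilon>) * b 0 * \<xi> \<le> b x * \<xi>"
    using x \<xi> by (intro mult_right_mono) (auto simp: algebra_simps)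
  moreover have "(1 - \<epsilon>) * b 0 * \<xi> = (1 - \<epsilon>)^2"
    using \<xi>(2) by (simp add: mult.assoc power2_eq_square)
  moreover have "1 - 2 * \<epsilon> \<le> (1 - \<epsilon>)^2"
    using zero_le_power2[of \<epsilon>] by (simp add: power2_eq_square algebra_simps)
  ultimately show ?thesis
    unfolding xi_integrand_eq_odds \<xi>_def[symmetric] using \<xi>(2) \<epsilon> by (intro odds_sq_near_1) auto
qed

lemma xi_integral_exceeds_1:
  assumes "0 < \<gamma>"
  shows "\<exists>\<xi>\<in>{0..<1 / b 0}. 1 < xi_integral {0..\<gamma>} \<xi>"
proof -
  obtain L \<delta> where L: "0 < L" "0 < \<delta>" "\<And>x. x \<in> {0..\<delta>} \<Longrightarrow> b 0 - L * x \<le> b x"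
    using b_lower_bound_near_0 by blast
  obtain m where m: "0 < m" "m \<le> \<delta>" "m \<le> \<gamma>"
    using L assms by (meson dual_order.refl min.cobounded1 min.cobounded2 min_less_iff_conj)
  define \<epsilon> where "\<epsilon> = min (1/4) (min (L * m / b 0) (b 0 / (32 * L)))"
  define w where "w = \<epsilon> * b 0 / L"
  define \<xi> where "\<xi> = (1 - \<epsilon>) / b 0"
  have \<epsilon>_le: "\<epsilon> \<le> 1/4" "\<epsilon> \<le> L * m / b 0" "\<epsilon> \<le> b 0 / (32 * L)"
    unfolding \<epsilon>_def by (meson min.cobounded1 min.cobounded2 order_trans)+
  have \<epsilon>: "0 < \<epsilon>"
    using L m b0_pos unfolding \<epsilon>_def by auto
  have w: "0 < w" "w \<le> m"
    unfolding w_def using \<epsilon> \<epsilon>_le(2) L b0_pos by (auto simp: field_simps)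
  have \<xi>: "0 \<le> \<xi>" "\<xi> < 1 / b 0"
    unfolding \<xi>_def using \<epsilon> \<epsilon>_le(1) b0_pos by (auto simp: field_simps)
  have lower: "1 / (16 * \<epsilon>^2) \<le> xi_integrand b \<xi> x" if x: "x \<in> {0..w}" for x
  proof -
    have "L * x \<le> \<epsilon> * b 0" using x L unfolding w_def by (simp add: field_simps)
    then show ?thesis
      unfolding \<xi>_def using x w m \<epsilon> \<epsilon>_le L(3)[of x] by (intro xi_integrand_near_pole) auto
  qed
  have "2 \<le> w * (1 / (16 * \<epsilon>^2))"
    using \<epsilon> \<epsilon>_le(3) L b0_pos unfolding w_def by (simp add: field_simps power2_eq_square)
  also have "\<dots> = integral {0..w} (\<lambda>x. 1 / (16 * \<epsilon>^2))"
    using w by simp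
  also have "\<dots> \<le> xi_integral {0..w} \<xi>"
    unfolding xi_integral_def using lower w \<xi>
    by (intro integral_le xi_integrand_integrable initial_interval_Icc) auto
  also have "\<dots> \<le> xi_integral {0..\<gamma>} \<xi>"
    using w m \<xi> assms by (intro xi_integral_mono_domain initial_interval_Icc) auto
  finally show ?thesis using \<xi> by (intro bexI[of _ \<xi>]) auto
qed

lemma xi_integral_0: "xi_integral S 0 = 0"
proof -
  have "xi_integrand b 0 = (\<lambda>x. 0)" by (simp add: xi_integrand_def fun_eq_iff)
  then show ?thesis by (simp add: xi_integral_def)
qed

lemma xi_eq_iff:
  assumes "initial_interval S"
  shows "xi_eq b S \<xi> \<longleftrightarrow> \<xi> \<in> {0..<1 / b 0} \<and> xi_integral S \<xi> = 1"
  using xi_integral_0[of S] xi_integrand_integrable[OF assms, of \<xi>]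
  unfolding xi_eq_def xi_integral_def
  by (cases "\<xi> = 0") (auto simp: has_integral_integrable_integral)

lemma ex1_xi_eq:
  assumes S: "initial_interval S"
  shows "\<exists>!\<xi>. xi_eq b S \<xi>"
proof -
  obtain \<gamma> where "0 < \<gamma>" "{0..\<gamma>} \<subseteq> S" using initial_interval_contains_Icc[OF S] .
  then obtain a where a: "a \<in> {0..<1 / b 0}" "1 < xi_integral {0..\<gamma>} a"
    using xi_integral_exceeds_1 by blast
  moreover have "xi_integral {0..\<gamma>} a \<le> xi_integral S a"
    using a xi_integral_mono_domain[OF initial_interval_Icc[OF \<open>0 < \<gamma>\<close>] S \<open>{0..\<gamma>} \<subseteq> S\<close>]
    by simp
  ultimately have a_S: "1 < xi_integral S a" by linarith
  have "\<exists>!\<xi>. \<xi> \<in> {0..<1 / b 0} \<and> xi_integral S \<xi> = 1"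
  proof (rule ex1_root_strict_mono_on[OF strict_mono_on_xi_integral[OF S]])
    show "continuous_on {0..a} (xi_integral S)"
      using a by (intro continuous_on_xi_integral[OF S]) auto
    show "xi_integral S 0 \<le> 1" by (simp add: xi_integral_0)
  qed (use a a_S in auto)
  then show ?thesis unfolding xi_eq_iff[OF S] .
qed

lemma xi_eq_xi: "0 < \<gamma> \<Longrightarrow> xi_eq b {0..\<gamma>} (xi b \<gamma>)"
  unfolding xi_def by (rule theI'[OF ex1_xi_eq[OF initial_interval_Icc]])

lemma xi_eq_xi_inf: "xi_eq b {0..} (xi_inf b)"
  unfolding xi_inf_def by (rule theI'[OF ex1_xi_eq[OF initial_interval_Ici]])

lemma xi_antimono:
  assumes "0 < \<gamma>1" "\<gamma>1 \<le> \<gamma>2"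
  shows "xi b \<gamma>2 \<le> xi b \<gamma>1"
proof -
  have S: "initial_interval {0..\<gamma>1}" "initial_interval {0..\<gamma>2}"
    using assms by (auto intro: initial_interval_Icc)
  have root1: "xi b \<gamma>1 \<in> {0..<1 / b 0}" "xi_integral {0..\<gamma>1} (xi b \<gamma>1) = 1"
    using xi_eq_xi[OF assms(1)] xi_eq_iff[OF S(1)] by auto
  have root2: "xi b \<gamma>2 \<in> {0..<1 / b 0}" "xi_integral {0..\<gamma>2} (xi b \<gamma>2) = 1"
    using xi_eq_xi[of \<gamma>2] assms xi_eq_iff[OF S(2)] by simp_all
  have "xi_integral {0..\<gamma>2} (xi b \<gamma>2) \<le> xi_integral {0..\<gamma>2} (xi b \<gamma>1)"
    using xi_integral_mono_domain[OF S, of "xi b \<gamma>1"] root1 root2 assms by auto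
  then show ?thesis
    using strict_mono_on_less_eq[OF strict_mono_on_xi_integral[OF S(2)] root2(1) root1(1)] by simp
qed

lemma tendsto_xi:
  assumes S: "initial_interval S" and r: "xi_eq b S r"
    and lim: "\<And>\<xi>. \<xi> \<in> {0<..<1 / b 0} \<Longrightarrow> ((\<lambda>\<gamma>. xi_integral {0..\<gamma>} \<xi>) \<longlongrightarrow> xi_integral S \<xi>) net"
    and pos: "\<forall>\<^sub>F \<gamma> in net. 0 < \<gamma>"
  shows "(xi b \<longlongrightarrow> r) net"
proof (rule tendsto_root_of_mono_family[where I = "{0<..<1 / b 0}" and c = 1
      and F = "\<lambda>\<gamma>. xi_integral {0..\<gamma>}" and G = "xi_integral S"])
  show "r \<in> {0<..<1 / b 0}" "xi_integral S r = 1"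
    using r xi_eq_iff[OF S] unfolding xi_eq_def by auto
  show "strict_mono_on {0<..<1 / b 0} (xi_integral S)"
    using strict_mono_on_xi_integral[OF S] by (rule monotone_on_subset) auto
  show "\<forall>\<^sub>F \<gamma> in net. mono_on {0<..<1 / b 0} (xi_integral {0..\<gamma>})"
    using pos
  proof eventually_elim
    case (elim \<gamma>)
    have "strict_mono_on {0<..<1 / b 0} (xi_integral {0..\<gamma>})"
      using strict_mono_on_xi_integral[OF initial_interval_Icc[OF elim]]
      by (rule monotone_on_subset) auto
    then show ?case by (rule strict_mono_on_imp_mono_on)
  qed
  show "\<forall>\<^sub>F \<gamma> in net. xi b \<gamma> \<in> {0<..<1 / b 0} \<and> xi_integral {0..\<gamma>} (xi b \<gamma>) = 1"
    using pos
  proof eventually_elim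
    case (elim \<gamma>)
    then show ?case
      using xi_eq_xi[OF elim] xi_eq_iff[OF initial_interval_Icc[OF elim]] unfolding xi_eq_def by auto
  qed
qed (use lim in simp_all)

lemma isCont_xi_integral_Icc:
  assumes "0 < \<gamma>" "0 \<le> \<xi>" "\<xi> < 1 / b 0"
  shows "isCont (\<lambda>\<gamma>. xi_integral {0..\<gamma>} \<xi>) \<gamma>"
proof -
  have "continuous_on {0..\<gamma> + 1} (\<lambda>\<gamma>. integral {0..\<gamma>} (xi_integrand b \<xi>))"
    using assms by (intro indefinite_integral_continuous_1 xi_integrand_integrable initial_interval_Icc) auto
  then show ?thesis
    unfolding xi_integral_def by (rule continuous_on_interior) (use assms in auto)
qed

lemma continuous_on_xi: "continuous_on {0<..} (xi b)"
proof (intro continuous_at_imp_continuous_on ballI)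
  fix \<gamma> :: real assume "\<gamma> \<in> {0<..}"
  then have \<gamma>: "0 < \<gamma>" by simp
  show "isCont (xi b) \<gamma>"
    unfolding isCont_def
  proof (rule tendsto_xi[OF initial_interval_Icc[OF \<gamma>] xi_eq_xi[OF \<gamma>]])
    fix \<xi> :: real assume "\<xi> \<in> {0<..<1 / b 0}"
    then show "((\<lambda>s. xi_integral {0..s} \<xi>) \<longlongrightarrow> xi_integral {0..\<gamma>} \<xi>) (at \<gamma>)"
      using isCont_xi_integral_Icc[OF \<gamma>, of \<xi>] by (simp add: isCont_def)
  next
    show "\<forall>\<^sub>F s in at \<gamma>. 0 < s"
      using eventually_at_in_open'[of "{0<..}" \<gamma>] \<gamma> by simp
  qed
qed

lemma tendsto_xi_at_top: "(xi b \<longlongrightarrow> xi_inf b) at_top"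
proof (rule tendsto_xi[OF initial_interval_Ici xi_eq_xi_inf])
  fix \<xi> assume "\<xi> \<in> {0<..<1 / b 0}"
  then show "((\<lambda>\<gamma>. xi_integral {0..\<gamma>} \<xi>) \<longlongrightarrow> xi_integral {0..} \<xi>) at_top"
    unfolding xi_integral_def
    by (intro tendsto_integral_Icc_at_top xi_integrand_integrable[OF initial_interval_Ici])
      (auto simp: xi_integrand_def)
qed simp

lemma psi_inverse_eq:
  assumes "\<xi> \<in> {0<..<1 / b 0}"
  shows "psi b (1 / \<xi>) = (1 + integral {0..} (\<lambda>x. odds (b x * \<xi>))) / \<xi>"
proof -
  have "b x / (1 / \<xi> - b x) = odds (b x * \<xi>)" if "x \<in> {0..}" for x
  proof -
    have "b x * \<xi> \<le> b 0 * \<xi>"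
      by (rule mult_right_mono) (use that assms b_le_b0 in auto)
    moreover have "b 0 * \<xi> < 1"
      using assms b0_mult_less_1 by simp
    ultimately have "b x * \<xi> < 1" by linarith
    then show ?thesis using assms by (simp add: odds_def field_simps)
  qed
  then have "integral {0..} (\<lambda>x. b x / (1 / \<xi> - b x)) = integral {0..} (\<lambda>x. odds (b x * \<xi>))"
    by (rule integral_cong)
  then show ?thesis unfolding psi_def by simp
qed

lemma continuous_on_integral_odds:
  "continuous_on {0<..<1 / b 0} (\<lambda>\<xi>. integral {0..} (\<lambda>x. odds (b x * \<xi>)))"
proof (rule continuous_on_Ioo_if_continuous_on_Icc)
  fix d :: real assume d: "d < 1 / b 0"
  show "continuous_on {0..d} (\<lambda>\<xi>. integral {0..} (\<lambda>x. odds (b x * \<xi>)))"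
  proof (cases "0 \<le> d")
    case True
    have m: "0 \<le> b 0 * d" "b 0 * d < 1" using True d b0_pos b0_mult_less_1 by auto
    have "mono_on {0..b 0 * d} odds" using m by (intro mono_onI odds_mono) auto
    moreover have "(1 / (1 - b 0 * d)^2)-lipschitz_on {0..b 0 * d} odds"
      using odds_lipschitz[OF m(2)] by (rule lipschitz_on_subset) auto
    moreover have "odds 0 = 0" by (simp add: odds_def)
    ultimately show ?thesis
      by (rule lipschitz_on_continuous_on[OF lipschitz_on_integral_comp_b[OF initial_interval_Ici]])
  qed simp
qed

lemma continuous_on_psi_inverse: "continuous_on {0<..<1 / b 0} (\<lambda>\<xi>. psi b (1 / \<xi>))"
proof -
  have "continuous_on {0<..<1 / b 0} (\<lambda>\<xi>. (1 + integral {0..} (\<lambda>x. odds (b x * \<xi>))) / \<xi>)"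
    using continuous_on_integral_odds by (intro continuous_intros) auto
  then show ?thesis
    by (rule continuous_on_eq) (simp add: psi_inverse_eq)
qed

end

theorem mainTheorem5:
  fixes b :: "real \<Rightarrow> real"
  assumes "assumption_A2 b"
  shows "(\<forall>\<gamma>>0. \<exists>!\<xi>. xi_eq b {0..\<gamma>} \<xi>)
       \<and> (\<forall>\<gamma>1 \<gamma>2. 0 < \<gamma>1 \<longrightarrow> \<gamma>1 \<le> \<gamma>2 \<longrightarrow> xi b \<gamma>2 \<le> xi b \<gamma>1)
       \<and> continuous_on {0<..} (xi b)
       \<and> (\<exists>!\<xi>. xi_eq b {0..} \<xi>)
       \<and> (xi b \<longlongrightarrow> xi_inf b) at_top
       \<and> ((\<lambda>\<gamma>. psi b (1 / xi b \<gamma>)) \<longlongrightarrow> psi b (1 / xi_inf b)) at_top"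
proof -
  interpret A2 b by (rule A2.intro) (fact assms)
  have "xi_inf b \<in> {0<..<1 / b 0}"
    using xi_eq_xi_inf by (simp add: xi_eq_def)
  moreover have "\<forall>\<^sub>F \<gamma> in at_top. xi b \<gamma> \<in> {0<..<1 / b 0}"
    using eventually_gt_at_top[of 0]
    by eventually_elim (use xi_eq_xi in \<open>auto simp: xi_eq_def\<close>)
  ultimately have psi_limit: "((\<lambda>\<gamma>. psi b (1 / xi b \<gamma>)) \<longlongrightarrow> psi b (1 / xi_inf b)) at_top"
    by (rule continuous_on_tendsto_compose[OF continuous_on_psi_inverse tendsto_xi_at_top])
  show ?thesis
  proof (intro conjI)
    show "\<forall>\<gamma>>0. \<exists>!\<xi>. xi_eq b {0..\<gamma>} \<xi>"
      using ex1_xi_eq[OF initial_interval_Icc] by simp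
    show "\<forall>\<gamma>1 \<gamma>2. 0 < \<gamma>1 \<longrightarrow> \<gamma>1 \<le> \<gamma>2 \<longrightarrow> xi b \<gamma>2 \<le> xi b \<gamma>1"
      using xi_antimono by simp
    show "\<exists>!\<xi>. xi_eq b {0..} \<xi>"
      by (rule ex1_xi_eq[OF initial_interval_Ici])
  qed (fact continuous_on_xi tendsto_xi_at_top psi_limit)+
qed

end
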